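(* Let $n\ge 1$ and let $V=\{(y_1,\dots,y_n)\in\overline{\mathbb{R}}_+^{\,n}\mid y_i>1\text{ for all } i=1,\dots,n\}$. Let $K\subseteq \overline{\mathbb{R}}_+^{\,n}$ be a convex subset with $K\cap V=\emptyset$. Then there are nonnegative real numbers $a_1,\dots,a_n$ with $\sum_{i=1}^n a_i=1$ such that \[\sum_{i=1}^n a_i x_i\le 1<\sum_{i=1}^n a_i y_i\quad\text{for all }(x_1,\dots,x_n)\in K\text{ and all }(y_1,\dots,y_n)\in V.\]
   Context: $\overline{\mathbb{R}}_+=[0,+\infty)\cup\{+\infty\}$ with the usual order, $+\infty$ the top element, and arithmetic extended by $r+\infty=\infty+r=+\infty$ for all $r$, $r\cdot(+\infty)=(+\infty)\cdot r=+\infty$ for $r>0$ and $0\cdot(+\infty)=(+\infty)\cdot 0=0$. $\overline{\mathbb{R}}_+^{\,n}$ carries coordinatewise addition and multiplication by scalars $r\in[0,\infty)$. A subset $K$ of $\overline{\mathbb{R}}_+^{\,n}$ is convex if $ra+(1-r)b\in K$ for all $a,b\in K$ and all real $r\in[0,1]$ (computed with the extended arithmetic). *)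

theory Defs
  imports Main "HOL-Library.Extended_Nonnegative_Real"
begin

text \<open>Points of the extended nonnegative orthant are functions from a finite index
type 'n (the coordinates 1..n) to ennreal = [0,+infinity], whose arithmetic satisfies
0 * infinity = 0 and r * infinity = infinity for r > 0. Real scalars r \<ge> 0 act
via ennreal r.\<close>

definition ennreal_convex :: "('n \<Rightarrow> ennreal) set \<Rightarrow> bool" where
  "ennreal_convex K \<longleftrightarrow>
     (\<forall>a\<in>K. \<forall>b\<in>K. \<forall>r::real. 0 \<le> r \<and> r \<le> 1 \<longrightarrow>
        (\<lambda>i. ennreal r * a i + ennreal (1 - r) * b i) \<in> K)"

definition V_set :: "('n \<Rightarrow> ennreal) set" where
  "V_set = {y. \<forall>i. y i > 1}"

end

theory Submission
  imports Defs "HOL-Analysis.Analysis"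
begin

text \<open>Replace K by the set D of real vectors lying coordinatewise below some point of K.
  D is convex, downward closed in \<open>\<real>\<^sup>n\<close> and misses the open orthant \<open>{u. \<forall>i. u\<^sub>i > 1}\<close>.
  The normal of a hyperplane separating the two is nonnegative because D is downward closed,
  and its level is at most the sum of its entries because the orthant accumulates at
  \<open>(1,\<dots>,1)\<close>; normalised, it gives weights a with \<open>\<Sum>a\<^sub>i z\<^sub>i \<le> 1\<close> on D. A point of K cannot
  have an infinite coordinate of positive weight, since D would then contain vectors of
  arbitrarily large weighted sum, so the bound carries over to K. The strict inequality on V
  only uses \<open>\<Sum>a\<^sub>i = 1\<close>.\<close>

text \<open>Negative coordinates are allowed (\<open>ennreal\<close> sends them to 0), which makes this set
  downward closed.\<close>

definition real_minorants :: "('n::finite \<Rightarrow> ennreal) set \<Rightarrow> (real^'n) set" where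
  "real_minorants K = {z. \<exists>x\<in>K. \<forall>i. ennreal (z $ i) \<le> x i}"

lemma convex_gt_one_orthant: "convex {u::real^'n. \<forall>i. 1 < u $ i}"
proof -
  have "{u::real^'n. \<forall>i. 1 < u $ i} = (\<Inter>i. {u. inner (axis i 1) u > 1})"
    by (auto simp: cart_eq_inner_axis inner_commute)
  then show ?thesis by (simp add: convex_INT convex_halfspace_gt)
qed

lemma ennreal_add_le: "ennreal (p + q) \<le> ennreal p + ennreal q"
  by (cases "p \<ge> 0"; cases "q \<ge> 0") (auto simp: ennreal_neg intro: ennreal_leI)

lemma ennreal_convex_combination_le:
  fixes z z' r :: real
  assumes "0 \<le> r" "r \<le> 1" "ennreal z \<le> x" "ennreal z' \<le> x'"
  shows "ennreal (r * z + (1 - r) * z') \<le> ennreal r * x + ennreal (1 - r) * x'"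
proof -
  have "ennreal (r * z + (1 - r) * z') \<le> ennreal r * ennreal z + ennreal (1 - r) * ennreal z'"
    using assms(1,2) ennreal_add_le[of "r * z" "(1 - r) * z'"] by (simp add: ennreal_mult')
  also have "\<dots> \<le> ennreal r * x + ennreal (1 - r) * x'"
    using assms(3,4) by (intro add_mono mult_left_mono) auto
  finally show ?thesis .
qed

lemma nonneg_if_inner_bdd_above_on_downward_closed:
  fixes D :: "(real^'n) set"
  assumes "z0 \<in> D" and downward: "\<And>z w. z \<in> D \<Longrightarrow> w \<le> z \<Longrightarrow> w \<in> D"
    and bdd: "\<forall>z\<in>D. inner a z \<le> b"
  shows "0 \<le> a $ j"
proof (rule ccontr)
  assume neg: "\<not> 0 \<le> a $ j"
  define t where "t = (b - inner a z0 + 1) / (- a $ j)"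
  have "0 < t"
    using neg bdd \<open>z0 \<in> D\<close> unfolding t_def by (intro divide_pos_pos) auto
  then have "z0 - t *\<^sub>R axis j 1 \<in> D"
    using downward \<open>z0 \<in> D\<close> by (auto simp: less_eq_vec_def axis_def)
  moreover have "inner a (z0 - t *\<^sub>R axis j 1) = inner a z0 - t * a $ j"
    by (simp add: inner_diff_right inner_axis)
  then have "inner a (z0 - t *\<^sub>R axis j 1) = b + 1"
    using neg unfolding t_def by simp
  ultimately show False
    using bdd by fastforce
qed

lemma le_sum_if_le_inner_on_gt_one_orthant:
  fixes a :: "real^'n"
  assumes nonneg: "\<And>i. 0 \<le> a $ i" and le: "\<forall>u. (\<forall>i. 1 < u $ i) \<longrightarrow> b \<le> inner a u"
  shows "b \<le> (\<Sum>i\<in>UNIV. a $ i)" (is "_ \<le> ?s")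
proof (rule field_le_epsilon)
  fix e :: real
  assume "0 < e"
  have "0 \<le> ?s"
    using nonneg by (simp add: sum_nonneg)
  with \<open>0 < e\<close> have "b \<le> inner a (\<chi> i. 1 + e / (?s + 1))"
    using le by (simp add: add_nonneg_pos)
  also have "\<dots> = ?s + ?s / (?s + 1) * e"
    by (simp add: inner_vec_def algebra_simps sum.distrib flip: sum_distrib_left sum_divide_distrib)
  also have "\<dots> \<le> ?s + e"
    using \<open>0 \<le> ?s\<close> \<open>0 < e\<close> by (simp add: divide_le_eq)
  finally show "b \<le> ?s + e" .
qed

lemma separating_weights_gt_one_orthant:
  fixes D :: "(real^'n) set"
  assumes "convex D" and downward: "\<And>z w. z \<in> D \<Longrightarrow> w \<le> z \<Longrightarrow> w \<in> D"
    and disjoint: "\<And>z. z \<in> D \<Longrightarrow> \<exists>i. z $ i \<le> 1"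
  shows "\<exists>a::'n \<Rightarrow> real. (\<forall>i. 0 \<le> a i) \<and> (\<Sum>i\<in>UNIV. a i) = 1 \<and>
           (\<forall>z\<in>D. (\<Sum>i\<in>UNIV. a i * z $ i) \<le> 1)"
proof (cases "D = {}")
  case True
  then show ?thesis
    by (intro exI[of _ "\<lambda>_. 1 / CARD('n)"]) simp
next
  case False
  then obtain z0 where "z0 \<in> D" by blast
  define U where "U = {u::real^'n. \<forall>i. 1 < u $ i}"
  have "convex U" "U \<noteq> {}"
    unfolding U_def using convex_gt_one_orthant by (auto intro!: exI[of _ "\<chi> i. 2"])
  have "D \<inter> U = {}"
    unfolding U_def using disjoint leD by blast
  then obtain c b where "c \<noteq> 0" and below: "\<forall>z\<in>D. inner c z \<le> b"
    and above: "\<forall>u\<in>U. b \<le> inner c u"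
    using separating_hyperplane_sets[OF \<open>convex D\<close> \<open>convex U\<close> False \<open>U \<noteq> {}\<close> \<open>D \<inter> U = {}\<close>]
    by blast
  have c_nonneg: "0 \<le> c $ i" for i
    using nonneg_if_inner_bdd_above_on_downward_closed[OF \<open>z0 \<in> D\<close> downward below] .
  define s where "s = (\<Sum>i\<in>UNIV. c $ i)"
  have "b \<le> s"
    unfolding s_def using le_sum_if_le_inner_on_gt_one_orthant c_nonneg above U_def by blast
  obtain j where "c $ j \<noteq> 0"
    using \<open>c \<noteq> 0\<close> by (metis vec_eq_iff zero_index)
  then have "0 < c $ j"
    using c_nonneg by (simp add: order_less_le)
  also have "c $ j \<le> s"
    unfolding s_def using c_nonneg by (intro member_le_sum) auto
  finally have "0 < s" .
  show ?thesis
  proof (intro exI[of _ "\<lambda>i. c $ i / s"] conjI allI ballI)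
    show "0 \<le> c $ i / s" for i
      using c_nonneg \<open>0 < s\<close> by simp
    show "(\<Sum>i\<in>UNIV. c $ i / s) = 1"
      using \<open>0 < s\<close> unfolding s_def by (simp flip: sum_divide_distrib)
    fix z assume "z \<in> D"
    have "(\<Sum>i\<in>UNIV. c $ i / s * z $ i) = inner c z / s"
      by (simp add: inner_vec_def sum_divide_distrib)
    also have "\<dots> \<le> 1"
      using below \<open>z \<in> D\<close> \<open>b \<le> s\<close> \<open>0 < s\<close> by (auto intro: order_trans)
    finally show "(\<Sum>i\<in>UNIV. c $ i / s * z $ i) \<le> 1" .
  qed
qed

lemma convex_real_minorants:
  fixes K :: "('n::finite \<Rightarrow> ennreal) set"
  assumes "ennreal_convex K"
  shows "convex (real_minorants K)"
  unfolding convex_alt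
proof (intro ballI allI impI)
  fix z z' :: "real^'n" and r :: real
  assume "z \<in> real_minorants K" "z' \<in> real_minorants K" and r: "0 \<le> r \<and> r \<le> 1"
  then obtain x x' where "x \<in> K" "x' \<in> K"
    and "\<forall>i. ennreal (z $ i) \<le> x i" "\<forall>i. ennreal (z' $ i) \<le> x' i"
    unfolding real_minorants_def by blast
  then have "\<forall>i. ennreal (((1 - r) *\<^sub>R z + r *\<^sub>R z') $ i) \<le> ennreal r * x' i + ennreal (1 - r) * x i"
    using r ennreal_convex_combination_le[of r] by (simp add: add.commute)
  moreover have "(\<lambda>i. ennreal r * x' i + ennreal (1 - r) * x i) \<in> K"
    using assms \<open>x \<in> K\<close> \<open>x' \<in> K\<close> r unfolding ennreal_convex_def by blast
  ultimately show "(1 - r) *\<^sub>R z + r *\<^sub>R z' \<in> real_minorants K"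
    unfolding real_minorants_def by (intro CollectI bexI)
qed

lemma real_minorants_downward_closed:
  "z \<in> real_minorants K \<Longrightarrow> w \<le> z \<Longrightarrow> w \<in> real_minorants K"
  unfolding real_minorants_def less_eq_vec_def by (blast intro: ennreal_leI order_trans)

lemma real_minorants_outside_V_set:
  assumes "K \<inter> V_set = {}" and "z \<in> real_minorants K"
  shows "\<exists>i. z $ i \<le> 1"
proof (rule ccontr)
  assume "\<not> (\<exists>i. z $ i \<le> 1)"
  then have "1 < ennreal (z $ i)" for i
    by (simp add: not_le)
  moreover obtain x where "x \<in> K" "\<forall>i. ennreal (z $ i) \<le> x i"
    using assms(2) unfolding real_minorants_def by blast
  ultimately have "x \<in> V_set"
    unfolding V_set_def by (blast intro: order_less_le_trans)
  with \<open>x \<in> K\<close> assms(1) show False by blast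
qed

lemma ennreal_weighted_sum_le_one:
  fixes x :: "'n::finite \<Rightarrow> ennreal"
  assumes nonneg: "\<And>i. 0 \<le> a i"
    and minorants: "\<And>z::real^'n. (\<And>i. ennreal (z $ i) \<le> x i) \<Longrightarrow> (\<Sum>i\<in>UNIV. a i * z $ i) \<le> 1"
  shows "(\<Sum>i\<in>UNIV. ennreal (a i) * x i) \<le> 1"
proof -
  have finite_coord: "x i \<noteq> \<infinity>" if "0 < a i" for i
  proof
    assume "x i = \<infinity>"
    define w :: "real^'n" where "w = (\<chi> k. if k = i then 2 / a i else 0)"
    have "(\<Sum>k\<in>UNIV. a k * w $ k) \<le> 1"
      using \<open>x i = \<infinity>\<close> by (intro minorants) (simp add: w_def)
    moreover have "(\<Sum>k\<in>UNIV. a k * w $ k) = 2"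
      using \<open>0 < a i\<close> by (simp add: w_def if_distrib sum.If_cases)
    ultimately show False
      by simp
  qed
  define z :: "real^'n" where "z = (\<chi> i. enn2real (x i))"
  have "ennreal (a i) * x i = ennreal (a i * z $ i)" for i
    using nonneg[of i] finite_coord[of i]
    by (cases "a i = 0") (auto simp: z_def ennreal_mult ennreal_enn2real_if)
  then have "(\<Sum>i\<in>UNIV. ennreal (a i) * x i) = ennreal (\<Sum>i\<in>UNIV. a i * z $ i)"
    using nonneg by (simp add: z_def)
  also have "\<dots> \<le> 1"
    using minorants[of z] by (simp add: z_def ennreal_enn2real_if)
  finally show ?thesis .
qed

lemma ennreal_weighted_sum_gt_one:
  fixes y :: "'n::finite \<Rightarrow> ennreal"
  assumes nonneg: "\<And>i. 0 \<le> a i" and sum_one: "(\<Sum>i\<in>UNIV. a i) = 1"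
    and gt_one: "\<And>i. 1 < y i"
  shows "1 < (\<Sum>i\<in>UNIV. ennreal (a i) * y i)"
proof -
  have "\<exists>m. 1 < m \<and> ennreal m \<le> y i" for i
  proof -
    obtain t where "1 < t" "t < y i"
      using gt_one dense by blast
    moreover have "t < top"
      using \<open>t < y i\<close> top_greatest by (rule order_less_le_trans)
    then obtain r where "t = ennreal r"
      by (auto simp: less_top_ennreal)
    ultimately show ?thesis
      by (intro exI[of _ r]) (auto simp: ennreal_less_iff)
  qed
  then obtain m where m: "\<And>i. 1 < m i" "\<And>i. ennreal (m i) \<le> y i"
    by metis
  obtain j where "a j \<noteq> 0"
    using sum_one by (metis sum.neutral zero_neq_one)
  with nonneg have "0 < a j"
    by (simp add: order_less_le)
  then have "(\<Sum>i\<in>UNIV. a i) < (\<Sum>i\<in>UNIV. a i * m i)"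
  proof (intro sum_strict_mono_ex1)
    show "\<forall>i\<in>UNIV. a i \<le> a i * m i"
      using nonneg m(1) by (metis less_imp_le mult.right_neutral mult_left_mono)
    show "\<exists>i\<in>UNIV. a i < a i * m i"
      using \<open>0 < a j\<close> m(1)[of j] by (metis UNIV_I mult.right_neutral mult_strict_left_mono)
  qed simp
  then have "1 < ennreal (\<Sum>i\<in>UNIV. a i * m i)"
    using sum_one by (simp add: ennreal_less_iff)
  also have "\<dots> = (\<Sum>i\<in>UNIV. ennreal (a i * m i))"
    using nonneg less_imp_le[OF order.strict_trans[OF zero_less_one m(1)]]
    by (intro sum_ennreal[symmetric]) simp
  also have "\<dots> = (\<Sum>i\<in>UNIV. ennreal (a i) * ennreal (m i))"
    using nonneg by (intro sum.cong refl) (simp add: ennreal_mult')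
  also have "\<dots> \<le> (\<Sum>i\<in>UNIV. ennreal (a i) * y i)"
    using m(2) by (intro sum_mono mult_left_mono) auto
  finally show ?thesis .
qed

theorem lemma2p6:
  fixes K :: "('n::finite \<Rightarrow> ennreal) set"
  assumes "ennreal_convex K"
    and "K \<inter> V_set = {}"
  shows "\<exists>a :: 'n \<Rightarrow> real. (\<forall>i. 0 \<le> a i) \<and> (\<Sum>i\<in>UNIV. a i) = 1 \<and>
           (\<forall>x\<in>K. \<forall>y\<in>V_set.
              (\<Sum>i\<in>UNIV. ennreal (a i) * x i) \<le> 1 \<and> 1 < (\<Sum>i\<in>UNIV. ennreal (a i) * y i))"
proof -
  obtain a :: "'n \<Rightarrow> real" where nonneg: "\<forall>i. 0 \<le> a i" and sum_one: "(\<Sum>i\<in>UNIV. a i) = 1"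
    and below: "\<forall>z\<in>real_minorants K. (\<Sum>i\<in>UNIV. a i * z $ i) \<le> 1"
    using separating_weights_gt_one_orthant[of "real_minorants K"] convex_real_minorants[OF assms(1)]
      real_minorants_downward_closed real_minorants_outside_V_set[OF assms(2)]
    by blast
  have "(\<Sum>i\<in>UNIV. ennreal (a i) * x i) \<le> 1" if "x \<in> K" for x
  proof (rule ennreal_weighted_sum_le_one)
    show "0 \<le> a i" for i
      using nonneg by blast
    show "(\<Sum>i\<in>UNIV. a i * z $ i) \<le> 1" if "\<And>i. ennreal (z $ i) \<le> x i" for z :: "real^'n"
      using below that \<open>x \<in> K\<close> unfolding real_minorants_def by blast
  qed
  moreover have "1 < (\<Sum>i\<in>UNIV. ennreal (a i) * y i)" if "y \<in> V_set" for y
    using nonneg sum_one \<open>y \<in> V_set\<close> ennreal_weighted_sum_gt_one unfolding V_set_def by blast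
  ultimately show ?thesis
    using nonneg sum_one by blast
qed

end
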